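(* Let $(A,A^* )$ be a left-symmetric bialgebroid. Then for all $x\in\Gamma(A)$, $\xi\in\Gamma(A^* )$ and $f\in C^\infty(M)$, $$x\cdot_A d_*f=-R_{df}x,\qquad \xi\cdot_{A^*}df=-R_{d_*f}\xi,$$ where $R_\eta:A\to A$ and $R_y:A^*\to A^*$ are defined by $\langle R_\eta x,\zeta\rangle=-\langle x,\zeta\cdot_{A^*}\eta\rangle$ and $\langle R_y\xi,z\rangle=-\langle\xi,z\cdot_Ay\rangle$.
   Context: A left-symmetric algebroid is a vector bundle $A\to M$ with an $\mathbb R$-bilinear multiplication $\cdot_A$ on $\Gamma(A)$ with $x\cdot_A(y\cdot_Az)-(x\cdot_Ay)\cdot_Az$ symmetric in $x,y$, and an anchor $a_A:A\to TM$ with $x\cdot_A(fy)=f(x\cdot_Ay)+a_A(x)(f)y$, $(fx)\cdot_Ay=f(x\cdot_Ay)$; $[x,y]_A=x\cdot_Ay-y\cdot_Ax$; $d$ is the differential of the Lie algebroid $(A,[\cdot,\cdot]_A,a_A)$. The coboundary $\delta:C^n(A)\to C^{n+1}(A)$, $C^{n+1}(A)=\Gamma(\wedge^nA^*\otimes A^* )$, is $\delta\varphi(x_1,\dots,x_{n+1})=\sum_{i=1}^n(-1)^{i+1}a_A(x_i)\varphi(\dots,\hat{x_i},\dots,x_{n+1})-\sum_{i=1}^n(-1)^{i+1}\varphi(\dots,\hat{x_i},\dots,x_n,x_i\cdot_Ax_{n+1})+\sum_{i<j\le n}(-1)^{i+j}\varphi([x_i,x_j]_A,\dots,\hat{x_i},\dots,\hat{x_j},\dots,x_{n+1})$.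 The Lie derivative $\mathfrak L_x$ on $\Gamma(A\otimes A)$ is $\mathfrak L_x(y_1\otimes y_2)=(x\cdot_Ay_1)\otimes y_2+y_1\otimes[x,y_2]_A$. For left-symmetric algebroids $A$ and $A^*$ on dual bundles, $[\cdot,\cdot]_{A^*}$, $d_*$ ($\langle d_*f,\xi\rangle=a_{A^*}(\xi)f$), $\delta_*$, $\mathfrak L_\xi$ are defined by the same formulas with $A$ and $A^*$ exchanged. $(A,A^* )$ is a left-symmetric bialgebroid if $\delta[\xi,\eta]_{A^*}=\mathfrak L_\xi\delta\eta-\mathfrak L_\eta\delta\xi$ and $\delta_*[x,y]_A=\mathfrak L_x\delta_*y-\mathfrak L_y\delta_*x$ for all $x,y\in\Gamma(A)$, $\xi,\eta\in\Gamma(A^* )$. *)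

theory Defs
  imports Main "HOL.Real_Vector_Spaces"
begin

text \<open>Algebraic (Serre--Swan) model.  The type 'f plays the role of C-infinity(M),
 'a of Gamma(A) and 'b of Gamma(A*).  Vector fields on M are the derivations of C-infinity(M).\<close>

definition is_fmodule :: "('f::comm_ring_1 \<Rightarrow> 'a::ab_group_add \<Rightarrow> 'a) \<Rightarrow> bool" where
  "is_fmodule sm \<longleftrightarrow>
     (\<forall>f x y. sm f (x + y) = sm f x + sm f y) \<and>
     (\<forall>f g x. sm (f + g) x = sm f x + sm g x) \<and>
     (\<forall>f g x. sm (f * g) x = sm f (sm g x)) \<and>
     (\<forall>x. sm 1 x = x)"

definition is_vector_field :: "('f::{comm_ring_1,real_algebra_1} \<Rightarrow> 'f) \<Rightarrow> bool" where
  "is_vector_field D \<longleftrightarrow>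
     (\<forall>f g. D (f + g) = D f + D g) \<and>
     (\<forall>f g. D (f * g) = f * D g + g * D f) \<and>
     (\<forall>c::real. D (of_real c) = 0)"

text \<open>Gamma(A) and Gamma(A*) are dual: a C-infinity-bilinear pairing pr x xi = <x,xi>,
 nondegenerate in the Gamma(A*) argument, and Gamma(A) is finitely generated projective
 with a dual basis (this makes Gamma(A*) the full dual module of Gamma(A) and vice versa).\<close>
definition dual_pair ::
  "('f::{comm_ring_1,real_algebra_1} \<Rightarrow> 'a::ab_group_add \<Rightarrow> 'a) \<Rightarrow> ('f \<Rightarrow> 'b::ab_group_add \<Rightarrow> 'b)
   \<Rightarrow> ('a \<Rightarrow> 'b \<Rightarrow> 'f) \<Rightarrow> bool" where
  "dual_pair sm sm' pr \<longleftrightarrow>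
     is_fmodule sm \<and> is_fmodule sm' \<and>
     (\<forall>x y \<xi>. pr (x + y) \<xi> = pr x \<xi> + pr y \<xi>) \<and>
     (\<forall>x \<xi> \<eta>. pr x (\<xi> + \<eta>) = pr x \<xi> + pr x \<eta>) \<and>
     (\<forall>f x \<xi>. pr (sm f x) \<xi> = f * pr x \<xi>) \<and>
     (\<forall>f x \<xi>. pr x (sm' f \<xi>) = f * pr x \<xi>) \<and>
     (\<forall>\<xi>. (\<forall>x. pr x \<xi> = 0) \<longrightarrow> \<xi> = 0) \<and>
     (\<exists>E::('a \<times> 'b) list. \<forall>x. x = (\<Sum>(e, \<epsilon>) \<leftarrow> E. sm (pr x \<epsilon>) e))"

definition left_symmetric_algebroid ::
  "('f::{comm_ring_1,real_algebra_1} \<Rightarrow> 'a::ab_group_add \<Rightarrow> 'a) \<Rightarrow> ('a \<Rightarrow> 'a \<Rightarrow> 'a)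
   \<Rightarrow> ('a \<Rightarrow> 'f \<Rightarrow> 'f) \<Rightarrow> bool" where
  "left_symmetric_algebroid sm m a \<longleftrightarrow>
     is_fmodule sm \<and>
     (\<forall>x. is_vector_field (a x)) \<and>
     (\<forall>x y g. a (x + y) g = a x g + a y g) \<and>
     (\<forall>f x g. a (sm f x) g = f * a x g) \<and>
     (\<forall>x y z. m (x + y) z = m x z + m y z) \<and>
     (\<forall>x y z. m x (y + z) = m x y + m x z) \<and>
     (\<forall>(c::real) x y. m (sm (of_real c) x) y = sm (of_real c) (m x y)) \<and>
     (\<forall>(c::real) x y. m x (sm (of_real c) y) = sm (of_real c) (m x y)) \<and>
     (\<forall>x y z. m x (m y z) - m (m x y) z = m y (m x z) - m (m y x) z) \<and>
     (\<forall>f x y. m x (sm f y) = sm f (m x y) + sm (a x f) y) \<and>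
     (\<forall>f x y. m (sm f x) y = sm f (m x y))"

definition commutator :: "('a::ab_group_add \<Rightarrow> 'a \<Rightarrow> 'a) \<Rightarrow> 'a \<Rightarrow> 'a \<Rightarrow> 'a" where
  "commutator m x y = m x y - m y x"

definition dA :: "('a \<Rightarrow> 'b \<Rightarrow> 'f) \<Rightarrow> ('a \<Rightarrow> 'f \<Rightarrow> 'f) \<Rightarrow> 'f \<Rightarrow> 'b" where
  "dA pr aA f = (THE \<xi>. \<forall>x. pr x \<xi> = aA x f)"

definition dstar :: "('a \<Rightarrow> 'b \<Rightarrow> 'f) \<Rightarrow> ('b \<Rightarrow> 'f \<Rightarrow> 'f) \<Rightarrow> 'f \<Rightarrow> 'a" where
  "dstar pr aB f = (THE y. \<forall>\<xi>. pr y \<xi> = aB \<xi> f)"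

text \<open>Coboundary on C^1(A) = Gamma(A*), with values in C^2(A) = Gamma(A* (x) A*) seen as
 C-infinity-bilinear forms on Gamma(A):  delta eta (x1,x2) = a_A(x1)<x2,eta> - <x1.x2, eta>.\<close>
definition deltaA :: "('a \<Rightarrow> 'b \<Rightarrow> 'f::ab_group_add) \<Rightarrow> ('a \<Rightarrow> 'a \<Rightarrow> 'a) \<Rightarrow> ('a \<Rightarrow> 'f \<Rightarrow> 'f)
    \<Rightarrow> 'b \<Rightarrow> 'a \<Rightarrow> 'a \<Rightarrow> 'f" where
  "deltaA pr mA aA \<eta> x1 x2 = aA x1 (pr x2 \<eta>) - pr (mA x1 x2) \<eta>"

definition deltaB :: "('a \<Rightarrow> 'b \<Rightarrow> 'f::ab_group_add) \<Rightarrow> ('b \<Rightarrow> 'b \<Rightarrow> 'b) \<Rightarrow> ('b \<Rightarrow> 'f \<Rightarrow> 'f)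
    \<Rightarrow> 'a \<Rightarrow> 'b \<Rightarrow> 'b \<Rightarrow> 'f" where
  "deltaB pr mB aB y \<xi>1 \<xi>2 = aB \<xi>1 (pr y \<xi>2) - pr y (mB \<xi>1 \<xi>2)"

text \<open>Elements of Gamma(A* (x) A*) written as finite sums of decomposables (lists of pairs),
 evaluated as bilinear forms on Gamma(A); likewise for Gamma(A (x) A).\<close>
definition tensB :: "('a \<Rightarrow> 'b \<Rightarrow> 'f::comm_ring_1) \<Rightarrow> ('b \<times> 'b) list \<Rightarrow> 'a \<Rightarrow> 'a \<Rightarrow> 'f" where
  "tensB pr L x1 x2 = (\<Sum>(\<eta>1, \<eta>2) \<leftarrow> L. pr x1 \<eta>1 * pr x2 \<eta>2)"

definition tensA :: "('a \<Rightarrow> 'b \<Rightarrow> 'f::comm_ring_1) \<Rightarrow> ('a \<times> 'a) list \<Rightarrow> 'b \<Rightarrow> 'b \<Rightarrow> 'f" where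
  "tensA pr L \<xi>1 \<xi>2 = (\<Sum>(y1, y2) \<leftarrow> L. pr y1 \<xi>1 * pr y2 \<xi>2)"

definition LieB :: "('b::ab_group_add \<Rightarrow> 'b \<Rightarrow> 'b) \<Rightarrow> 'b \<Rightarrow> ('b \<times> 'b) list \<Rightarrow> ('b \<times> 'b) list" where
  "LieB mB \<xi> L = concat (map (\<lambda>(\<eta>1, \<eta>2). [(mB \<xi> \<eta>1, \<eta>2), (\<eta>1, commutator mB \<xi> \<eta>2)]) L)"

definition LieA :: "('a::ab_group_add \<Rightarrow> 'a \<Rightarrow> 'a) \<Rightarrow> 'a \<Rightarrow> ('a \<times> 'a) list \<Rightarrow> ('a \<times> 'a) list" where
  "LieA mA x L = concat (map (\<lambda>(y1, y2). [(mA x y1, y2), (y1, commutator mA x y2)]) L)"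

definition left_symmetric_bialgebroid ::
  "('f::{comm_ring_1,real_algebra_1} \<Rightarrow> 'a::ab_group_add \<Rightarrow> 'a) \<Rightarrow> ('f \<Rightarrow> 'b::ab_group_add \<Rightarrow> 'b)
   \<Rightarrow> ('a \<Rightarrow> 'b \<Rightarrow> 'f) \<Rightarrow> ('a \<Rightarrow> 'a \<Rightarrow> 'a) \<Rightarrow> ('a \<Rightarrow> 'f \<Rightarrow> 'f)
   \<Rightarrow> ('b \<Rightarrow> 'b \<Rightarrow> 'b) \<Rightarrow> ('b \<Rightarrow> 'f \<Rightarrow> 'f) \<Rightarrow> bool" where
  "left_symmetric_bialgebroid sm sm' pr mA aA mB aB \<longleftrightarrow>
     dual_pair sm sm' pr \<and>
     left_symmetric_algebroid sm mA aA \<and>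
     left_symmetric_algebroid sm' mB aB \<and>
     (\<forall>\<xi> \<eta> L1 L2. tensB pr L1 = deltaA pr mA aA \<eta> \<longrightarrow> tensB pr L2 = deltaA pr mA aA \<xi> \<longrightarrow>
        deltaA pr mA aA (commutator mB \<xi> \<eta>) =
          (\<lambda>x1 x2. tensB pr (LieB mB \<xi> L1) x1 x2 - tensB pr (LieB mB \<eta> L2) x1 x2)) \<and>
     (\<forall>x y L1 L2. tensA pr L1 = deltaB pr mB aB y \<longrightarrow> tensA pr L2 = deltaB pr mB aB x \<longrightarrow>
        deltaB pr mB aB (commutator mA x y) =
          (\<lambda>\<xi>1 \<xi>2. tensA pr (LieA mA x L1) \<xi>1 \<xi>2 - tensA pr (LieA mA y L2) \<xi>1 \<xi>2))"

definition RA :: "('a \<Rightarrow> 'b \<Rightarrow> 'f::ab_group_add) \<Rightarrow> ('b \<Rightarrow> 'b \<Rightarrow> 'b) \<Rightarrow> 'b \<Rightarrow> 'a \<Rightarrow> 'a" where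
  "RA pr mB \<eta> x = (THE w. \<forall>\<zeta>. pr w \<zeta> = - pr x (mB \<zeta> \<eta>))"

definition RB :: "('a \<Rightarrow> 'b \<Rightarrow> 'f::ab_group_add) \<Rightarrow> ('a \<Rightarrow> 'a \<Rightarrow> 'a) \<Rightarrow> 'a \<Rightarrow> 'b \<Rightarrow> 'b" where
  "RB pr mA y \<xi> = (THE \<omega>. \<forall>z. pr z \<omega> = - pr (mA z y) \<xi>)"

end

theory Submission
  imports Defs
begin

text \<open>Write the compatibility condition
  \<open>\<delta>\<^sub>*[x,y] = L\<^sub>x \<delta>\<^sub>*y - L\<^sub>y \<delta>\<^sub>*x\<close> once for \<open>(x, y)\<close> and once for \<open>(x, g y)\<close>.
  Expanding the second with the Leibniz rules of both algebroids (the tensor \<open>g \<cdot> T + d\<^sub>*g \<otimes> y\<close>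
  represents \<open>\<delta>\<^sub>*(g y)\<close> when \<open>T\<close> represents \<open>\<delta>\<^sub>*y\<close>) and subtracting \<open>g\<close> times the first, everything
  cancels except \<open>(\<langle>x \<cdot> d\<^sub>*g, \<xi>\<rangle> - \<langle>x, \<xi> \<cdot> dg\<rangle>) \<langle>y, \<eta>\<rangle>\<close>. So this product vanishes for all \<open>y, \<eta>\<close>,
  and non-degeneracy of the pairing gives \<open>x \<cdot> d\<^sub>*g = -R\<^bsub>dg\<^esub> x\<close>. The second identity is the first
  one for the bialgebroid \<open>(A\<^sup>*, A)\<close>, obtained by flipping the pairing.\<close>

lemma is_fmodule_module: "is_fmodule sm \<Longrightarrow> module sm"
  unfolding is_fmodule_def by unfold_locales simp_all

lemma tensA_Nil [simp]: "tensA pr [] \<xi>1 \<xi>2 = 0"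
  by (simp add: tensA_def)

lemma tensA_Cons [simp]:
  "tensA pr ((y1, y2) # L) \<xi>1 \<xi>2 = pr y1 \<xi>1 * pr y2 \<xi>2 + tensA pr L \<xi>1 \<xi>2"
  by (simp add: tensA_def)

lemma tensA_append [simp]:
  "tensA pr (L @ M) \<xi>1 \<xi>2 = tensA pr L \<xi>1 \<xi>2 + tensA pr M \<xi>1 \<xi>2"
  by (simp add: tensA_def)

lemma LieA_Nil [simp]: "LieA m x [] = []"
  by (simp add: LieA_def)

lemma LieA_Cons [simp]:
  "LieA m x ((y1, y2) # L) = (m x y1, y2) # (y1, commutator m x y2) # LieA m x L"
  by (simp add: LieA_def)

lemma LieA_append [simp]: "LieA m x (L @ M) = LieA m x L @ LieA m x M"
  by (simp add: LieA_def)

lemma left_symmetric_algebroidD: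
  assumes "left_symmetric_algebroid sm m a"
  shows lsa_anchor_add_right: "a x (f + g) = a x f + a x g"
    and lsa_anchor_mult_right: "a x (f * g) = f * a x g + g * a x f"
    and lsa_anchor_add: "a (x + y) f = a x f + a y f"
    and lsa_anchor_scale: "a (sm f x) g = f * a x g"
    and lsa_mult_add_left: "m (x + y) z = m x z + m y z"
    and lsa_mult_add_right: "m x (y + z) = m x y + m x z"
    and lsa_mult_scale_left: "m (sm f x) y = sm f (m x y)"
    and lsa_mult_scale_right: "m x (sm f y) = sm f (m x y) + sm (a x f) y"
proof -
  note H = assms[unfolded left_symmetric_algebroid_def is_vector_field_def]
  show "a x (f + g) = a x f + a x g" using H by auto
  show "a x (f * g) = f * a x g + g * a x f" using H by auto
  show "a (x + y) f = a x f + a y f" using H by auto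
  show "a (sm f x) g = f * a x g" using H by auto
  show "m (x + y) z = m x z + m y z" using H by auto
  show "m x (y + z) = m x y + m x z" using H by auto
  show "m (sm f x) y = sm f (m x y)" using H by auto
  show "m x (sm f y) = sm f (m x y) + sm (a x f) y" using H by auto
qed

locale dual_pairing =
  fixes sm :: "'f::{comm_ring_1,real_algebra_1} \<Rightarrow> 'a::ab_group_add \<Rightarrow> 'a"
    and sm' :: "'f \<Rightarrow> 'b::ab_group_add \<Rightarrow> 'b"
    and pr :: "'a \<Rightarrow> 'b \<Rightarrow> 'f"
  assumes dual_pair: "dual_pair sm sm' pr"
begin

sublocale sections: module sm
  using dual_pair is_fmodule_module unfolding dual_pair_def by blast

lemma pr_add_left [simp]: "pr (x + y) \<xi> = pr x \<xi> + pr y \<xi>"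
  and pr_add_right [simp]: "pr x (\<xi> + \<eta>) = pr x \<xi> + pr x \<eta>"
  and pr_scale_left [simp]: "pr (sm f x) \<xi> = f * pr x \<xi>"
  and pr_scale_right [simp]: "pr x (sm' f \<xi>) = f * pr x \<xi>"
  using dual_pair unfolding dual_pair_def by blast+

lemma nondegenerate_right: "(\<And>x. pr x \<xi> = 0) \<Longrightarrow> \<xi> = 0"
  using dual_pair unfolding dual_pair_def by blast

lemma additive_pr_left: "additive (\<lambda>x. pr x \<xi>)"
  and additive_pr_right: "additive (pr x)"
  by unfold_locales simp_all

lemma pr_zero_left [simp]: "pr 0 \<xi> = 0"
  and pr_zero_right [simp]: "pr x 0 = 0"
  and pr_diff_left [simp]: "pr (x - y) \<xi> = pr x \<xi> - pr y \<xi>"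
  and pr_diff_right [simp]: "pr x (\<xi> - \<eta>) = pr x \<xi> - pr x \<eta>"
  by (simp_all add: additive.zero[OF additive_pr_left] additive.zero[OF additive_pr_right]
      additive.diff[OF additive_pr_left] additive.diff[OF additive_pr_right])

definition dual_basis :: "('a \<times> 'b) list \<Rightarrow> bool" where
  "dual_basis E \<longleftrightarrow> (\<forall>x. x = (\<Sum>(e, \<epsilon>) \<leftarrow> E. sm (pr x \<epsilon>) e))"

lemma dual_basis_exists: "\<exists>E. dual_basis E"
  using dual_pair unfolding dual_pair_def dual_basis_def by blast

lemma pr_sum_scale_left: "pr (\<Sum>(e, \<epsilon>) \<leftarrow> E. sm (c e \<epsilon>) e) \<xi> = (\<Sum>(e, \<epsilon>) \<leftarrow> E. c e \<epsilon> * pr e \<xi>)"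
  by (induction E) auto

lemma pr_sum_scale_right: "pr x (\<Sum>(e, \<epsilon>) \<leftarrow> E. sm' (c e \<epsilon>) \<epsilon>) = (\<Sum>(e, \<epsilon>) \<leftarrow> E. c e \<epsilon> * pr x \<epsilon>)"
  by (induction E) auto

lemma dual_basis_pr:
  assumes "dual_basis E"
  shows "pr x \<xi> = (\<Sum>(e, \<epsilon>) \<leftarrow> E. pr x \<epsilon> * pr e \<xi>)"
proof -
  have "pr x \<xi> = pr (\<Sum>(e, \<epsilon>) \<leftarrow> E. sm (pr x \<epsilon>) e) \<xi>"
    using assms unfolding dual_basis_def by metis
  also have "\<dots> = (\<Sum>(e, \<epsilon>) \<leftarrow> E. pr x \<epsilon> * pr e \<xi>)"
    by (rule pr_sum_scale_left)
  finally show ?thesis .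
qed

lemma dual_basis_expansion_right:
  assumes "dual_basis E"
  shows "\<xi> = (\<Sum>(e, \<epsilon>) \<leftarrow> E. sm' (pr e \<xi>) \<epsilon>)"
proof -
  have "pr x (\<Sum>(e, \<epsilon>) \<leftarrow> E. sm' (pr e \<xi>) \<epsilon>) = pr x \<xi>" for x
    using dual_basis_pr[OF assms, of x \<xi>]
    by (simp add: pr_sum_scale_right mult.commute)
  then show ?thesis
    using nondegenerate_right[of "(\<Sum>(e, \<epsilon>) \<leftarrow> E. sm' (pr e \<xi>) \<epsilon>) - \<xi>"] by simp
qed

lemma nondegenerate_left:
  assumes "\<And>\<xi>. pr x \<xi> = 0"
  shows "x = 0"
proof -
  obtain E where "dual_basis E"
    using dual_basis_exists by blast
  then have "x = (\<Sum>(e, \<epsilon>) \<leftarrow> E. sm (pr x \<epsilon>) e)"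
    unfolding dual_basis_def by blast
  also have "\<dots> = 0"
    by (simp add: assms split_def)
  finally show ?thesis .
qed

lemma dual_pairing_flip: "dual_pairing sm' sm (\<lambda>\<xi> x. pr x \<xi>)"
proof -
  obtain E where E: "dual_basis E"
    using dual_basis_exists by blast
  have "\<xi> = (\<Sum>(\<epsilon>, e) \<leftarrow> map (\<lambda>(e, \<epsilon>). (\<epsilon>, e)) E. sm' (pr e \<xi>) \<epsilon>)" for \<xi>
    using dual_basis_expansion_right[OF E, of \<xi>] by (simp add: comp_def split_def)
  then have "\<exists>E'. \<forall>\<xi>. \<xi> = (\<Sum>(\<epsilon>, e) \<leftarrow> E'. sm' (pr e \<xi>) \<epsilon>)"
    by blast
  moreover have "is_fmodule sm" "is_fmodule sm'"
    using dual_pair unfolding dual_pair_def by blast+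
  ultimately show ?thesis
    unfolding dual_pairing_def dual_pair_def using nondegenerate_left by simp
qed

lemma linear_functional_expansion:
  assumes E: "dual_basis E" and F: "additive F" "\<And>g \<xi>. F (sm' g \<xi>) = g * F \<xi>"
  shows "F \<xi> = (\<Sum>(e, \<epsilon>) \<leftarrow> E. pr e \<xi> * F \<epsilon>)"
proof -
  interpret F: additive F by (rule F(1))
  have "F \<xi> = F (\<Sum>(e, \<epsilon>) \<leftarrow> E. sm' (pr e \<xi>) \<epsilon>)"
    using dual_basis_expansion_right[OF E] by (rule arg_cong)
  also have "\<dots> = (\<Sum>(e, \<epsilon>) \<leftarrow> E. pr e \<xi> * F \<epsilon>)"
    by (induction E) (auto simp: F.zero F.add F(2))
  finally show ?thesis .
qed

lemma linear_functional_representable: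
  assumes "additive F" "\<And>g \<xi>. F (sm' g \<xi>) = g * F \<xi>"
  shows "\<exists>!y. \<forall>\<xi>. pr y \<xi> = F \<xi>"
proof -
  obtain E where E: "dual_basis E"
    using dual_basis_exists by blast
  define y where "y = (\<Sum>(e, \<epsilon>) \<leftarrow> E. sm (F \<epsilon>) e)"
  have y: "pr y \<xi> = F \<xi>" for \<xi>
    unfolding y_def pr_sum_scale_left linear_functional_expansion[OF E assms, of \<xi>]
    by (simp add: mult.commute)
  moreover have "y' = y" if "\<forall>\<xi>. pr y' \<xi> = F \<xi>" for y'
    using nondegenerate_left[of "y' - y"] that y by simp
  ultimately show ?thesis
    by blast
qed

lemma bilinear_form_representable:
  assumes additive_left: "\<And>\<eta>. additive (\<lambda>\<xi>. B \<xi> \<eta>)"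
    and additive_right: "\<And>\<xi>. additive (B \<xi>)"
    and scale_left: "\<And>g \<xi> \<eta>. B (sm' g \<xi>) \<eta> = g * B \<xi> \<eta>"
    and scale_right: "\<And>g \<xi> \<eta>. B \<xi> (sm' g \<eta>) = g * B \<xi> \<eta>"
  shows "\<exists>L. tensA pr L = B"
proof -
  obtain E where E: "dual_basis E"
    using dual_basis_exists by blast
  define L where "L = concat (map (\<lambda>(e, \<epsilon>). map (\<lambda>(e', \<epsilon>'). (sm (B \<epsilon> \<epsilon>') e, e')) E) E)"
  have row: "tensA pr (map (\<lambda>(e', \<epsilon>'). (sm (B \<epsilon> \<epsilon>') e, e')) Q) \<xi>1 \<xi>2
      = pr e \<xi>1 * (\<Sum>(e', \<epsilon>') \<leftarrow> Q. pr e' \<xi>2 * B \<epsilon> \<epsilon>')" for e \<epsilon> Q \<xi>1 \<xi>2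
    by (induction Q) (auto simp: distrib_left mult.assoc mult.left_commute)
  have column: "(\<Sum>(e', \<epsilon>') \<leftarrow> E. pr e' \<xi>2 * B \<epsilon> \<epsilon>') = B \<epsilon> \<xi>2" for \<epsilon> \<xi>2
    by (rule linear_functional_expansion[OF E additive_right scale_right, symmetric])
  have "tensA pr (concat (map (\<lambda>(e, \<epsilon>). map (\<lambda>(e', \<epsilon>'). (sm (B \<epsilon> \<epsilon>') e, e')) E) P)) \<xi>1 \<xi>2
      = (\<Sum>(e, \<epsilon>) \<leftarrow> P. pr e \<xi>1 * B \<epsilon> \<xi>2)" for P \<xi>1 \<xi>2
    by (induction P) (auto simp: row column)
  then have "tensA pr L \<xi>1 \<xi>2 = B \<xi>1 \<xi>2" for \<xi>1 \<xi>2
    unfolding L_def using linear_functional_expansion[OF E additive_left scale_left] by metis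
  then show ?thesis
    by blast
qed

lemma eq_0_if_pr_mult_pr_eq_0:
  assumes "\<And>\<xi> y \<eta>. pr x \<xi> * pr y \<eta> = 0"
  shows "x = 0"
proof (rule nondegenerate_left)
  fix \<eta>
  obtain E where "dual_basis E"
    using dual_basis_exists by blast
  then show "pr x \<eta> = 0"
    by (simp add: dual_basis_pr[of E x \<eta>] assms split_def)
qed

lemma tensA_scale_first:
  "tensA pr (map (\<lambda>(y1, y2). (sm g y1, y2)) L) \<xi>1 \<xi>2 = g * tensA pr L \<xi>1 \<xi>2"
  by (induction L) (auto simp: algebra_simps)

end

definition deltaB_bracket_compatible ::
  "('a::ab_group_add \<Rightarrow> 'b::ab_group_add \<Rightarrow> 'f::comm_ring_1) \<Rightarrow> ('a \<Rightarrow> 'a \<Rightarrow> 'a)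
    \<Rightarrow> ('b \<Rightarrow> 'b \<Rightarrow> 'b) \<Rightarrow> ('b \<Rightarrow> 'f \<Rightarrow> 'f) \<Rightarrow> bool" where
  "deltaB_bracket_compatible pr mA mB aB \<longleftrightarrow>
     (\<forall>x y L1 L2. tensA pr L1 = deltaB pr mB aB y \<longrightarrow> tensA pr L2 = deltaB pr mB aB x \<longrightarrow>
        deltaB pr mB aB (commutator mA x y) =
          (\<lambda>\<xi>1 \<xi>2. tensA pr (LieA mA x L1) \<xi>1 \<xi>2 - tensA pr (LieA mA y L2) \<xi>1 \<xi>2))"

locale dual_left_symmetric_algebroids = dual_pairing sm sm' pr
  for sm :: "'f::{comm_ring_1,real_algebra_1} \<Rightarrow> 'a::ab_group_add \<Rightarrow> 'a"
    and sm' :: "'f \<Rightarrow> 'b::ab_group_add \<Rightarrow> 'b"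
    and pr :: "'a \<Rightarrow> 'b \<Rightarrow> 'f" +
  fixes mA :: "'a \<Rightarrow> 'a \<Rightarrow> 'a" and aA :: "'a \<Rightarrow> 'f \<Rightarrow> 'f"
    and mB :: "'b \<Rightarrow> 'b \<Rightarrow> 'b" and aB :: "'b \<Rightarrow> 'f \<Rightarrow> 'f"
  assumes lsa_A: "left_symmetric_algebroid sm mA aA"
    and lsa_B: "left_symmetric_algebroid sm' mB aB"
begin

lemma pr_dstar: "pr (dstar pr aB g) \<xi> = aB \<xi> g"
proof -
  have "\<exists>!y. \<forall>\<xi>. pr y \<xi> = aB \<xi> g"
    by (rule linear_functional_representable)
      (unfold_locales, simp_all add: lsa_anchor_add[OF lsa_B] lsa_anchor_scale[OF lsa_B])
  then show ?thesis
    unfolding dstar_def by (rule theI'[THEN spec])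
qed

lemma pr_dA: "pr x (dA pr aA g) = aA x g"
proof -
  have "\<exists>!\<xi>. \<forall>x. pr x \<xi> = aA x g"
    by (rule dual_pairing.linear_functional_representable[OF dual_pairing_flip])
      (unfold_locales, simp_all add: lsa_anchor_add[OF lsa_A] lsa_anchor_scale[OF lsa_A])
  then show ?thesis
    unfolding dA_def by (rule theI'[THEN spec])
qed

lemma pr_RA: "pr (RA pr mB \<eta> x) \<zeta> = - pr x (mB \<zeta> \<eta>)"
proof -
  have "\<exists>!y. \<forall>\<zeta>. pr y \<zeta> = - pr x (mB \<zeta> \<eta>)"
    by (rule linear_functional_representable)
      (unfold_locales, simp_all add: lsa_mult_add_left[OF lsa_B] lsa_mult_scale_left[OF lsa_B])
  then show ?thesis
    unfolding RA_def by (rule theI'[THEN spec])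
qed

lemma deltaB_representable: "\<exists>L. tensA pr L = deltaB pr mB aB y"
  by (rule bilinear_form_representable; unfold_locales?)
    (simp_all add: deltaB_def algebra_simps left_symmetric_algebroidD[OF lsa_B])

lemma deltaB_add: "deltaB pr mB aB (u + v) \<xi>1 \<xi>2 = deltaB pr mB aB u \<xi>1 \<xi>2 + deltaB pr mB aB v \<xi>1 \<xi>2"
  by (simp add: deltaB_def lsa_anchor_add_right[OF lsa_B])

lemma deltaB_scale:
  "deltaB pr mB aB (sm g u) \<xi>1 \<xi>2 = g * deltaB pr mB aB u \<xi>1 \<xi>2 + pr u \<xi>2 * aB \<xi>1 g"
  by (simp add: deltaB_def lsa_anchor_mult_right[OF lsa_B] algebra_simps)

lemma commutator_scale_right:
  "commutator mA x (sm g y) = sm g (commutator mA x y) + sm (aA x g) y"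
  by (simp add: commutator_def lsa_mult_scale_left[OF lsa_A] lsa_mult_scale_right[OF lsa_A]
      sections.scale_right_diff_distrib)

lemma commutator_scale_left:
  "commutator mA (sm g y) z = sm g (commutator mA y z) - sm (aA z g) y"
  by (simp add: commutator_def lsa_mult_scale_left[OF lsa_A] lsa_mult_scale_right[OF lsa_A]
      sections.scale_right_diff_distrib)

lemma tensA_LieA_scale_first:
  "tensA pr (LieA mA x (map (\<lambda>(y1, y2). (sm g y1, y2)) L)) \<xi>1 \<xi>2
     = g * tensA pr (LieA mA x L) \<xi>1 \<xi>2 + aA x g * tensA pr L \<xi>1 \<xi>2"
  by (induction L) (auto simp: lsa_mult_scale_right[OF lsa_A] algebra_simps)

lemma tensA_LieA_scale_point:
  "tensA pr (LieA mA (sm g y) L) \<xi>1 \<xi>2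
     = g * tensA pr (LieA mA y L) \<xi>1 \<xi>2 - pr y \<xi>2 * tensA pr L \<xi>1 (dA pr aA g)"
  by (induction L) (auto simp: commutator_scale_left lsa_mult_scale_left[OF lsa_A] pr_dA algebra_simps)

lemma tensA_deltaB_scale:
  assumes "tensA pr T = deltaB pr mB aB y"
  shows "tensA pr (map (\<lambda>(y1, y2). (sm g y1, y2)) T @ [(dstar pr aB g, y)]) = deltaB pr mB aB (sm g y)"
proof (intro ext)
  fix \<xi>1 \<xi>2
  show "tensA pr (map (\<lambda>(y1, y2). (sm g y1, y2)) T @ [(dstar pr aB g, y)]) \<xi>1 \<xi>2
      = deltaB pr mB aB (sm g y) \<xi>1 \<xi>2"
    using assms by (simp add: tensA_scale_first deltaB_scale pr_dstar mult.commute)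
qed

lemma mult_dstar_defect_mult_pr_eq_0:
  assumes compatible: "deltaB_bracket_compatible pr mA mB aB"
  shows "(pr (mA x (dstar pr aB g)) \<xi>1 - pr x (mB \<xi>1 (dA pr aA g))) * pr y \<xi>2 = 0"
proof -
  obtain Ty where Ty: "tensA pr Ty = deltaB pr mB aB y"
    using deltaB_representable by blast
  obtain Tx where Tx: "tensA pr Tx = deltaB pr mB aB x"
    using deltaB_representable by blast
  define Tgy where "Tgy = map (\<lambda>(y1, y2). (sm g y1, y2)) Ty @ [(dstar pr aB g, y)]"
  have Tgy: "tensA pr Tgy = deltaB pr mB aB (sm g y)"
    unfolding Tgy_def using Ty by (rule tensA_deltaB_scale)
  have bracket: "deltaB pr mB aB (commutator mA x y) \<xi>1 \<xi>2
      = tensA pr (LieA mA x Ty) \<xi>1 \<xi>2 - tensA pr (LieA mA y Tx) \<xi>1 \<xi>2"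
    using compatible Ty Tx unfolding deltaB_bracket_compatible_def by simp
  have bracket_scaled: "deltaB pr mB aB (commutator mA x (sm g y)) \<xi>1 \<xi>2
      = tensA pr (LieA mA x Tgy) \<xi>1 \<xi>2 - tensA pr (LieA mA (sm g y) Tx) \<xi>1 \<xi>2"
    using compatible Tgy Tx unfolding deltaB_bracket_compatible_def by simp
  have leibniz: "deltaB pr mB aB (commutator mA x (sm g y)) \<xi>1 \<xi>2
      = g * deltaB pr mB aB (commutator mA x y) \<xi>1 \<xi>2 + pr (commutator mA x y) \<xi>2 * aB \<xi>1 g
        + aA x g * deltaB pr mB aB y \<xi>1 \<xi>2 + pr y \<xi>2 * aB \<xi>1 (aA x g)"
    by (simp add: commutator_scale_right deltaB_add deltaB_scale)
  have Lie_first: "tensA pr (LieA mA x Tgy) \<xi>1 \<xi>2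
      = g * tensA pr (LieA mA x Ty) \<xi>1 \<xi>2 + aA x g * deltaB pr mB aB y \<xi>1 \<xi>2
        + pr (mA x (dstar pr aB g)) \<xi>1 * pr y \<xi>2 + aB \<xi>1 g * pr (commutator mA x y) \<xi>2"
    by (simp add: Tgy_def tensA_LieA_scale_first pr_dstar Ty algebra_simps)
  have Lie_second: "tensA pr (LieA mA (sm g y) Tx) \<xi>1 \<xi>2
      = g * tensA pr (LieA mA y Tx) \<xi>1 \<xi>2 - pr y \<xi>2 * (aB \<xi>1 (aA x g) - pr x (mB \<xi>1 (dA pr aA g)))"
    by (simp add: tensA_LieA_scale_point Tx deltaB_def pr_dA)
  have "(pr (mA x (dstar pr aB g)) \<xi>1 - pr x (mB \<xi>1 (dA pr aA g))) * pr y \<xi>2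
      = tensA pr (LieA mA x Tgy) \<xi>1 \<xi>2 - tensA pr (LieA mA (sm g y) Tx) \<xi>1 \<xi>2
        - deltaB pr mB aB (commutator mA x (sm g y)) \<xi>1 \<xi>2"
    by (simp only: leibniz Lie_first Lie_second bracket) (simp add: algebra_simps)
  then show ?thesis
    using bracket_scaled by simp
qed

lemma mult_dstar_eq_minus_RA:
  assumes "deltaB_bracket_compatible pr mA mB aB"
  shows "mA x (dstar pr aB f) = - RA pr mB (dA pr aA f) x"
proof -
  have "mA x (dstar pr aB f) + RA pr mB (dA pr aA f) x = 0"
    by (rule eq_0_if_pr_mult_pr_eq_0)
      (use mult_dstar_defect_mult_pr_eq_0[OF assms] in \<open>simp add: pr_RA\<close>)
  then show ?thesis
    by (simp add: eq_neg_iff_add_eq_0)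
qed

end

lemma flip_pairing_operators:
  shows tensA_flip: "tensA (\<lambda>\<xi> x. pr x \<xi>) = tensB pr"
    and deltaB_flip: "deltaB (\<lambda>\<xi> x. pr x \<xi>) mA aA = deltaA pr mA aA"
    and LieA_eq_LieB: "LieA = LieB"
    and dstar_flip: "dstar (\<lambda>\<xi> x. pr x \<xi>) aA = dA pr aA"
    and dA_flip: "dA (\<lambda>\<xi> x. pr x \<xi>) aB = dstar pr aB"
    and RA_flip: "RA (\<lambda>\<xi> x. pr x \<xi>) mA = RB pr mA"
  by (intro ext; simp add: tensA_def tensB_def deltaA_def deltaB_def LieA_def LieB_def
      dstar_def dA_def RA_def RB_def)+

lemma left_symmetric_bialgebroid_iff:
  "left_symmetric_bialgebroid sm sm' pr mA aA mB aB \<longleftrightarrow>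
     dual_pair sm sm' pr \<and> left_symmetric_algebroid sm mA aA \<and> left_symmetric_algebroid sm' mB aB \<and>
     deltaB_bracket_compatible (\<lambda>\<xi> x. pr x \<xi>) mB mA aA \<and> deltaB_bracket_compatible pr mA mB aB"
  unfolding left_symmetric_bialgebroid_def deltaB_bracket_compatible_def
    tensA_flip[of pr] deltaB_flip[of pr] LieA_eq_LieB ..

theorem mainTheorem3:
  fixes sm :: "'f::{comm_ring_1,real_algebra_1} \<Rightarrow> 'a::ab_group_add \<Rightarrow> 'a"
    and sm' :: "'f \<Rightarrow> 'b::ab_group_add \<Rightarrow> 'b"
    and pr :: "'a \<Rightarrow> 'b \<Rightarrow> 'f"
    and mA :: "'a \<Rightarrow> 'a \<Rightarrow> 'a" and aA :: "'a \<Rightarrow> 'f \<Rightarrow> 'f"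
    and mB :: "'b \<Rightarrow> 'b \<Rightarrow> 'b" and aB :: "'b \<Rightarrow> 'f \<Rightarrow> 'f"
    and x :: 'a and \<xi> :: 'b and f :: 'f
  assumes "left_symmetric_bialgebroid sm sm' pr mA aA mB aB"
  shows "mA x (dstar pr aB f) = - RA pr mB (dA pr aA f) x \<and>
         mB \<xi> (dA pr aA f) = - RB pr mA (dstar pr aB f) \<xi>"
proof -
  have pairing: "dual_pairing sm sm' pr"
    and lsa_A: "left_symmetric_algebroid sm mA aA" and lsa_B: "left_symmetric_algebroid sm' mB aB"
    and compatible_B: "deltaB_bracket_compatible (\<lambda>\<xi> x. pr x \<xi>) mB mA aA"
    and compatible_A: "deltaB_bracket_compatible pr mA mB aB"
    using assms unfolding left_symmetric_bialgebroid_iff dual_pairing_def by simp_all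
  interpret A: dual_left_symmetric_algebroids sm sm' pr mA aA mB aB
    by (intro dual_left_symmetric_algebroids.intro dual_left_symmetric_algebroids_axioms.intro
        pairing lsa_A lsa_B)
  interpret B: dual_left_symmetric_algebroids sm' sm "\<lambda>\<xi> x. pr x \<xi>" mB aB mA aA
    by (intro dual_left_symmetric_algebroids.intro dual_left_symmetric_algebroids_axioms.intro
        A.dual_pairing_flip lsa_A lsa_B)
  have "mA x (dstar pr aB f) = - RA pr mB (dA pr aA f) x"
    by (rule A.mult_dstar_eq_minus_RA[OF compatible_A])
  moreover have "mB \<xi> (dA pr aA f) = - RB pr mA (dstar pr aB f) \<xi>"
    \<comment> \<open>the flip rules must be instantiated: uninstantiated, they match \<open>pr\<close> itself by
      eta-expansion and rewrite \<open>dstar\<close> and \<open>dA\<close> into each other forever\<close>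
    using B.mult_dstar_eq_minus_RA[OF compatible_B, of \<xi> f]
    by (simp only: dstar_flip[of pr] dA_flip[of pr] RA_flip[of pr])
  ultimately show ?thesis ..
qed

end
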